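(* Let $W:\Omega^2\to[0,1]$ be a graphon. Then $\lim_{n\to\infty}\Pr[\mathbb{G}(n,W)\text{ is Hamiltonian}]=0$ if at least one of the following holds: (i) $W$ is not a connected graphon; (ii) $\lim_{\alpha\searrow0}\frac{\mu(\mathsf{D}_W(\alpha))}{\alpha}=\infty$; (iii) $W$ has a narrow peninsula; (iv) there is a measurable partition $\Omega=S\sqcup T$ with $\mu(S)=\mu(T)=\tfrac12$ such that $W=0$ almost everywhere on $(S\times S)\cup(T\times T)$.
   Context: $(\Omega,\mu)$ is an atomless standard probability space. A graphon is a symmetric measurable function $W:\Omega^2\to[0,1]$. The random graph $\mathbb{G}(n,W)$ on vertex set $[n]$ is generated by first sampling independent types $X_1,\dots,X_n\in\Omega$ according to $\mu$, and then, conditionally on the types, including each edge $\{i,j\}$ independently with probability $W(X_i,X_j)$. $\deg_W(x)=\int_\Omega W(x,y)\,d\mu(y)$ and $\mathsf{D}_W(\alpha)=\{x\in\Omega:\deg_W(x)\le\alpha\}$. $W$ is connected if for every measurable partition $\Omega=S\sqcup T$ with $\mu(S),\mu(T)>0$ we have $\int_{S\times T}W\,d\mu^2>0$. $W$ has a narrow peninsula if there exist $a\in(0,\tfrac12]$ and disjoint measurable sets $A,B\subseteq\Omega$ with $\mu(A)>a$, $\mu(B)=1-2a$, such that $W=0$ almost everywhere on $A\times(A\cup B)$. *)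

theory Defs
  imports "HOL-Probability.Probability"
begin

definition unit_lebesgue :: "real measure" where
  "unit_lebesgue = restrict_space lborel {0..1}"

definition atomless_standard_prob_space :: "'a measure \<Rightarrow> bool" where
  "atomless_standard_prob_space M \<longleftrightarrow> prob_space M \<and>
     (\<exists>f g. f \<in> measurable M unit_lebesgue \<and> g \<in> measurable unit_lebesgue M \<and>
        distr M unit_lebesgue f = unit_lebesgue \<and> distr unit_lebesgue M g = M \<and>
        (AE x in M. g (f x) = x) \<and> (AE y in unit_lebesgue. f (g y) = y))"

definition graphon :: "'a measure \<Rightarrow> ('a \<Rightarrow> 'a \<Rightarrow> real) \<Rightarrow> bool" where
  "graphon M W \<longleftrightarrow> (\<lambda>p. W (fst p) (snd p)) \<in> borel_measurable (M \<Otimes>\<^sub>M M) \<and>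
     (\<forall>x\<in>space M. \<forall>y\<in>space M. W x y = W y x \<and> 0 \<le> W x y \<and> W x y \<le> 1)"

definition deg :: "'a measure \<Rightarrow> ('a \<Rightarrow> 'a \<Rightarrow> real) \<Rightarrow> 'a \<Rightarrow> real" where
  "deg M W x = (\<integral>y. W x y \<partial>M)"

definition low_deg_set :: "'a measure \<Rightarrow> ('a \<Rightarrow> 'a \<Rightarrow> real) \<Rightarrow> real \<Rightarrow> 'a set" where
  "low_deg_set M W \<alpha> = {x \<in> space M. deg M W x \<le> \<alpha>}"

definition connected_graphon :: "'a measure \<Rightarrow> ('a \<Rightarrow> 'a \<Rightarrow> real) \<Rightarrow> bool" where
  "connected_graphon M W \<longleftrightarrow>
     (\<forall>S T. S \<in> sets M \<and> T \<in> sets M \<and> S \<inter> T = {} \<and> S \<union> T = space M \<and>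
        measure M S > 0 \<and> measure M T > 0 \<longrightarrow>
        (\<integral>p \<in> S \<times> T. W (fst p) (snd p) \<partial>(M \<Otimes>\<^sub>M M)) > 0)"

definition narrow_peninsula :: "'a measure \<Rightarrow> ('a \<Rightarrow> 'a \<Rightarrow> real) \<Rightarrow> bool" where
  "narrow_peninsula M W \<longleftrightarrow>
     (\<exists>a A B. 0 < a \<and> a \<le> 1/2 \<and> A \<in> sets M \<and> B \<in> sets M \<and> A \<inter> B = {} \<and>
        measure M A > a \<and> measure M B = 1 - 2 * a \<and>
        (AE p in M \<Otimes>\<^sub>M M. p \<in> A \<times> (A \<union> B) \<longrightarrow> W (fst p) (snd p) = 0))"

text \<open>Graphs on vertex set {0..<n}: edge sets are sets of pairs (i,j) with i<j<n.\<close>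
definition all_pairs :: "nat \<Rightarrow> (nat \<times> nat) set" where
  "all_pairs n = {(i, j). i < j \<and> j < n}"

definition hamiltonian :: "nat \<Rightarrow> (nat \<times> nat) set \<Rightarrow> bool" where
  "hamiltonian n E \<longleftrightarrow> 3 \<le> n \<and>
     (\<exists>p. bij_betw p {..<n} {..<n} \<and>
        (\<forall>k<n. (min (p k) (p (Suc k mod n)), max (p k) (p (Suc k mod n))) \<in> E))"

text \<open>Probability that G(n,W) equals the graph with edge set E, given types x.\<close>
definition graph_prob ::
    "('a \<Rightarrow> 'a \<Rightarrow> real) \<Rightarrow> nat \<Rightarrow> (nat \<Rightarrow> 'a) \<Rightarrow> (nat \<times> nat) set \<Rightarrow> real" where
  "graph_prob W n x E = (\<Prod>e\<in>all_pairs n.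
      if e \<in> E then W (x (fst e)) (x (snd e)) else 1 - W (x (fst e)) (x (snd e)))"

text \<open>Pr[G(n,W) is Hamiltonian]: types i.i.d. from M, then edges independently.\<close>
definition ham_prob :: "'a measure \<Rightarrow> ('a \<Rightarrow> 'a \<Rightarrow> real) \<Rightarrow> nat \<Rightarrow> real" where
  "ham_prob M W n = (\<integral>x. (\<Sum>E \<in> {E. E \<subseteq> all_pairs n \<and> hamiltonian n E}. graph_prob W n x E)
      \<partial>(PiM {..<n} (\<lambda>_. M)))"

end

theory Submission
  imports Defs
begin

text \<open>
  Given the types, \<open>G(n, W)\<close> can only be Hamiltonian if the vertices can be arranged in a
  cycle along which \<open>W\<close> does not vanish. In cases (i), (iii) and (iv), \<open>W\<close> vanishes almost
  everywhere on a set of type pairs that such a cycle must avoid, and this forces a counting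
  constraint on the types: all of them lie on the same side of the partition; at least as many
  lie outside \<open>A \<union> B\<close>, a set lighter than \<open>A\<close>, as in the peninsula \<open>A\<close>, since every vertex
  of \<open>A\<close> is followed by one outside \<open>A \<union> B\<close>; exactly half of them lie in \<open>S\<close>, since the halves alternate. For independent
  types these events have probabilities \<open>\<mu>(S)\<^sup>n + \<mu>(T)\<^sup>n\<close>, \<open>O(1/n)\<close> by Chebyshev's inequality,
  and \<open>binom(2m, m) / 4\<^sup>m = O(1/\<surd>n)\<close>. In case (ii), a Hamiltonian graph has no isolated
  vertex, whereas a second moment argument shows that some vertex whose type has degree at most
  \<open>\<epsilon>/n\<close> is isolated with high probability, because the expected number of such types,
  \<open>n \<mu>(D(\<epsilon>/n)) = \<epsilon> \<mu>(D(\<alpha>))/\<alpha>\<close> with \<open>\<alpha> = \<epsilon>/n\<close>, tends to infinity.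
\<close>

section \<open>Random edge sets\<close>

definition bernoulli_subset_prob :: "('e \<Rightarrow> real) \<Rightarrow> 'e set \<Rightarrow> 'e set \<Rightarrow> real" where
  "bernoulli_subset_prob w P E = (\<Prod>e\<in>P. if e \<in> E then w e else 1 - w e)"

lemma graph_prob_eq_bernoulli_subset_prob:
  "graph_prob W n x E = bernoulli_subset_prob (\<lambda>e. W (x (fst e)) (x (snd e))) (all_pairs n) E"
  by (simp add: graph_prob_def bernoulli_subset_prob_def)

lemma bernoulli_subset_prob_nonneg:
  "(\<And>e. e \<in> P \<Longrightarrow> 0 \<le> w e \<and> w e \<le> 1) \<Longrightarrow> 0 \<le> bernoulli_subset_prob w P E"
  unfolding bernoulli_subset_prob_def by (intro prod_nonneg) auto

lemma sum_bernoulli_subset_prob_avoiding: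
  assumes P: "finite P" and Q: "Q \<subseteq> P"
  shows "(\<Sum>E\<in>Pow P. if E \<inter> Q = {} then bernoulli_subset_prob w P E else 0) = (\<Prod>e\<in>Q. 1 - w e)"
proof -
  let ?w' = "\<lambda>e. if e \<in> Q then 0 else w e"
  have summand: "prod ?w' E * (\<Prod>e\<in>P - E. 1 - w e) =
      (if E \<inter> Q = {} then bernoulli_subset_prob w P E else 0)" if E: "E \<subseteq> P" for E
  proof (cases "E \<inter> Q = {}")
    case True
    then have "prod ?w' E = prod w E" by (intro prod.cong) auto
    moreover have "bernoulli_subset_prob w P E = prod w E * (\<Prod>e\<in>P - E. 1 - w e)"
      unfolding bernoulli_subset_prob_def using P E
      by (subst prod.If_cases) (auto simp: Int_absorb1 Diff_eq)
    ultimately show ?thesis using True by simp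
  next
    case False
    then have "prod ?w' E = 0" using P E by (intro prod_zero) (auto intro: finite_subset)
    then show ?thesis using False by simp
  qed
  have "(\<Prod>e\<in>Q. 1 - w e) = (\<Prod>e\<in>P. if e \<in> Q then 1 - w e else 1)"
    using P Q by (subst prod.If_cases) (auto simp: Int_absorb1)
  also have "\<dots> = (\<Prod>e\<in>P. ?w' e + (1 - w e))" by (intro prod.cong) auto
  also have "\<dots> = (\<Sum>E\<in>Pow P. prod ?w' E * (\<Prod>e\<in>P - E. 1 - w e))"
    using P by (rule prod_add)
  also have "\<dots> = (\<Sum>E\<in>Pow P. if E \<inter> Q = {} then bernoulli_subset_prob w P E else 0)"
    using summand by (intro sum.cong) auto
  finally show ?thesis ..
qed

lemma sum_bernoulli_subset_prob: "finite P \<Longrightarrow> (\<Sum>E\<in>Pow P. bernoulli_subset_prob w P E) = 1"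
  using sum_bernoulli_subset_prob_avoiding[of P "{}" w] by simp

lemma one_minus_sum_le_prod_one_minus:
  fixes w :: "'e \<Rightarrow> real"
  assumes "finite Q" "\<And>e. e \<in> Q \<Longrightarrow> 0 \<le> w e \<and> w e \<le> 1"
  shows "1 - (\<Sum>e\<in>Q. w e) \<le> (\<Prod>e\<in>Q. 1 - w e)"
  using assms
proof (induction Q rule: finite_induct)
  case (insert a F)
  have IH: "1 - sum w F \<le> (\<Prod>e\<in>F. 1 - w e)" and a: "0 \<le> w a" "w a \<le> 1"
    using insert by auto
  have "(\<Prod>e\<in>F. 1 - w e) \<le> 1" using insert by (intro prod_le_1) auto
  then have "w a * (\<Prod>e\<in>F. 1 - w e) \<le> w a" using a by (simp add: mult_left_le)
  then show ?case using insert IH by (simp add: algebra_simps)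
qed simp

lemma sum_vanishing_le_second_moment:
  fixes g Z :: "'b \<Rightarrow> real"
  assumes "finite A" "B \<subseteq> A" "\<And>a. a \<in> A \<Longrightarrow> 0 \<le> g a" "\<And>a. a \<in> B \<Longrightarrow> Z a = 0" "0 < t"
  shows "(\<Sum>a\<in>B. g a) \<le> (\<Sum>a\<in>A. g a * (Z a - t)\<^sup>2) / t\<^sup>2"
proof -
  have "(\<Sum>a\<in>B. g a) = (\<Sum>a\<in>B. g a * (Z a - t)\<^sup>2) / t\<^sup>2"
    using assms(4,5) by (simp add: sum_divide_distrib)
  also have "\<dots> \<le> (\<Sum>a\<in>A. g a * (Z a - t)\<^sup>2) / t\<^sup>2"
    using assms(1-3) by (intro divide_right_mono sum_mono2) auto
  finally show ?thesis .
qed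

section \<open>Hamiltonian cycles\<close>

lemma finite_all_pairs: "finite (all_pairs n)"
  by (rule finite_subset[of _ "{..<n} \<times> {..<n}"]) (auto simp: all_pairs_def)

definition cycle_avoids :: "nat \<Rightarrow> ('a \<times> 'a) set \<Rightarrow> (nat \<Rightarrow> 'a) \<Rightarrow> bool" where
  "cycle_avoids n R x \<longleftrightarrow> 3 \<le> n \<and>
     (\<exists>p. bij_betw p {..<n} {..<n} \<and> (\<forall>k<n. (x (p k), x (p (Suc k mod n))) \<notin> R))"

lemma cycle_avoids_mono:
  assumes "cycle_avoids n R x"
    and "\<And>i j. i < n \<Longrightarrow> j < n \<Longrightarrow> i \<noteq> j \<Longrightarrow> (x i, x j) \<in> R' \<Longrightarrow> (x i, x j) \<in> R"
  shows "cycle_avoids n R' x"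
proof -
  obtain p where n: "3 \<le> n" and p: "bij_betw p {..<n} {..<n}"
    and avoid: "\<And>k. k < n \<Longrightarrow> (x (p k), x (p (Suc k mod n))) \<notin> R"
    using assms(1) unfolding cycle_avoids_def by blast
  have "(x (p k), x (p (Suc k mod n))) \<notin> R'" if k: "k < n" for k
  proof -
    have "Suc k mod n < n" "Suc k mod n \<noteq> k" using n k by (auto simp: mod_Suc)
    then have "p k < n" "p (Suc k mod n) < n" "p k \<noteq> p (Suc k mod n)"
      using p k by (auto simp: bij_betw_def inj_on_def)
    then show ?thesis using assms(2) avoid[OF k] by blast
  qed
  then show ?thesis using n p unfolding cycle_avoids_def by blast
qed

lemma card_filter_bij_betw:
  assumes "bij_betw p {..<n} {..<n}"
  shows "card {k. k < n \<and> P (p k)} = card {i. i < n \<and> P i}"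
proof -
  have "p ` {k. k < n \<and> P (p k)} = {i. i < n \<and> P i}"
  proof (intro equalityI subsetI)
    fix i assume i: "i \<in> {i. i < n \<and> P i}"
    then have "i \<in> p ` {..<n}" using assms by (simp add: bij_betw_def)
    then show "i \<in> p ` {k. k < n \<and> P (p k)}" using i by auto
  qed (use bij_betwE[OF assms] in auto)
  then have "bij_betw p {k. k < n \<and> P (p k)} {i. i < n \<and> P i}"
    by (rule bij_betw_subset[OF assms, rotated]) auto
  then show ?thesis by (rule bij_betw_same_card)
qed

text \<open>Passing to the successor on the cycle maps the vertices of type in \<open>U\<close> injectively to
  vertices of type in \<open>V\<close>.\<close>
lemma cycle_avoids_card_le:
  assumes "cycle_avoids n (U \<times> Y) x" and "\<forall>i<n. x i \<in> Y \<union> V"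
  shows "card {i. i < n \<and> x i \<in> U} \<le> card {i. i < n \<and> x i \<in> V}"
proof -
  obtain p where p: "bij_betw p {..<n} {..<n}"
    and avoid: "\<And>k. k < n \<Longrightarrow> (x (p k), x (p (Suc k mod n))) \<notin> U \<times> Y"
    using assms(1) unfolding cycle_avoids_def by blast
  have "inj_on (\<lambda>k. Suc k mod n) {..<n}"
  proof (rule inj_onI)
    fix a b assume "a \<in> {..<n}" "b \<in> {..<n}" and "Suc a mod n = Suc b mod n"
    then show "a = b" by (simp add: mod_Suc split: if_split_asm)
  qed
  then have "inj_on (\<lambda>k. Suc k mod n) {k. k < n \<and> x (p k) \<in> U}"
    by (rule inj_on_subset) auto
  moreover have "x (p (Suc k mod n)) \<in> V" if "k < n" "x (p k) \<in> U" for k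
  proof -
    have "Suc k mod n < n" using that by simp
    then have "p (Suc k mod n) < n" using bij_betwE[OF p] by blast
    then show ?thesis using assms(2) avoid[of k] that by blast
  qed
  ultimately have "card {k. k < n \<and> x (p k) \<in> U} \<le> card {k. k < n \<and> x (p k) \<in> V}"
    by (intro card_inj_on_le) auto
  then show ?thesis
    using card_filter_bij_betw[OF p, of "\<lambda>i. x i \<in> U"] card_filter_bij_betw[OF p, of "\<lambda>i. x i \<in> V"]
    by simp
qed

lemma cycle_avoids_all_in:
  assumes "cycle_avoids n (S \<times> T) x" and "\<forall>i<n. x i \<in> S \<union> T" and "i < n" "x i \<in> S"
  shows "\<forall>j<n. x j \<in> S"
proof -
  obtain p where p: "bij_betw p {..<n} {..<n}"
    and avoid: "\<And>k. k < n \<Longrightarrow> (x (p k), x (p (Suc k mod n))) \<notin> S \<times> T"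
    using assms(1) unfolding cycle_avoids_def by blast
  have surj: "p ` {..<n} = {..<n}" using p by (simp add: bij_betw_def)
  obtain k0 where k0: "k0 < n" "p k0 = i" using assms(3) surj by (metis imageE lessThan_iff)
  have reach: "x (p ((k0 + d) mod n)) \<in> S" for d
  proof (induction d)
    case (Suc d)
    define j where "j = (k0 + d) mod n"
    have j: "j < n" "Suc j mod n < n" using k0 by (simp_all add: j_def)
    then have "x (p (Suc j mod n)) \<in> S \<union> T" using assms(2) bij_betwE[OF p] by blast
    then have "x (p (Suc j mod n)) \<in> S" using avoid[OF j(1)] Suc.IH by (auto simp: j_def)
    moreover have "Suc j mod n = (k0 + Suc d) mod n" by (simp add: j_def mod_Suc_eq)
    ultimately show ?case by simp
  qed (use k0 assms(4) in simp)
  show ?thesis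
  proof (intro allI impI)
    fix j assume "j < n"
    then obtain k where k: "k < n" "p k = j" using surj by (metis imageE lessThan_iff)
    then have "(k0 + (k + n - k0)) mod n = k" using k0 by simp
    then show "x j \<in> S" using reach[of "k + n - k0"] k by simp
  qed
qed

lemma cycle_avoids_alternating_card:
  assumes cycle: "cycle_avoids n (S \<times> S \<union> T \<times> T) x" and cover: "\<forall>i<n. x i \<in> S \<union> T"
    and disjoint: "S \<inter> T = {}"
  shows "2 * card {i. i < n \<and> x i \<in> S} = n"
proof -
  have "card {i. i < n \<and> x i \<in> S} \<le> card {i. i < n \<and> x i \<in> T}"
    using cycle cover by (intro cycle_avoids_card_le[of n S S]) (auto intro: cycle_avoids_mono)
  moreover have "card {i. i < n \<and> x i \<in> T} \<le> card {i. i < n \<and> x i \<in> S}"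
    using cycle cover by (intro cycle_avoids_card_le[of n T T]) (auto intro: cycle_avoids_mono)
  moreover have "{i. i < n \<and> x i \<in> S} \<union> {i. i < n \<and> x i \<in> T} = {..<n}" using cover by auto
  then have "card {i. i < n \<and> x i \<in> S} + card {i. i < n \<and> x i \<in> T} = n"
    using disjoint by (subst card_Un_disjoint[symmetric]) auto
  ultimately show ?thesis by simp
qed

lemma hamiltonian_incident:
  assumes "hamiltonian n E" and "i < n"
  shows "\<exists>e\<in>E. fst e = i \<or> snd e = i"
proof -
  obtain p where p: "bij_betw p {..<n} {..<n}"
    and edge: "\<And>k. k < n \<Longrightarrow> (min (p k) (p (Suc k mod n)), max (p k) (p (Suc k mod n))) \<in> E"
    using assms(1) unfolding hamiltonian_def by blast
  obtain k where k: "k < n" "p k = i" using assms(2) p by (metis bij_betw_def imageE lessThan_iff)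
  show ?thesis using k by (intro bexI[OF _ edge[OF k(1)]]) (auto simp: min_def max_def)
qed

lemma hamiltonian_cycle_avoids_zero:
  assumes "hamiltonian n E" and "E \<subseteq> all_pairs n" and "graph_prob W n x E \<noteq> 0"
    and sym: "\<And>i j. i < n \<Longrightarrow> j < n \<Longrightarrow> W (x i) (x j) = W (x j) (x i)"
  shows "cycle_avoids n {(u, v). W u v = 0} x"
proof -
  obtain p where n: "3 \<le> n" and p: "bij_betw p {..<n} {..<n}"
    and edge: "\<And>k. k < n \<Longrightarrow> (min (p k) (p (Suc k mod n)), max (p k) (p (Suc k mod n))) \<in> E"
    using assms(1) unfolding hamiltonian_def by blast
  have nonzero: "W (x (fst e)) (x (snd e)) \<noteq> 0" if "e \<in> E" for e
  proof
    assume "W (x (fst e)) (x (snd e)) = 0"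
    then have "graph_prob W n x E = 0"
      unfolding graph_prob_def using that assms(2)
      by (intro prod_zero finite_all_pairs bexI[of _ e]) auto
    with assms(3) show False by simp
  qed
  have "W (x (p k)) (x (p (Suc k mod n))) \<noteq> 0" if k: "k < n" for k
  proof -
    have "p k < n" "p (Suc k mod n) < n" using p k n by (auto simp: bij_betw_def)
    then show ?thesis using nonzero[OF edge[OF k]] sym
      by (cases "p k \<le> p (Suc k mod n)") (auto simp: min_def max_def)
  qed
  then show ?thesis using n p unfolding cycle_avoids_def by auto
qed

lemma sum_indicator_eq_card_filter:
  fixes n :: nat
  shows "(\<Sum>i<n. indicator A (x i) :: real) = card {i. i < n \<and> x i \<in> A}"
proof -
  have "(\<Sum>i<n. indicator A (x i) :: real) = card ({..<n} \<inter> {i. x i \<in> A})"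
    by (simp add: indicator_def)
  also have "{..<n} \<inter> {i. x i \<in> A} = {i. i < n \<and> x i \<in> A}" by auto
  finally show ?thesis .
qed

definition incident_pairs :: "nat \<Rightarrow> nat \<Rightarrow> (nat \<times> nat) set" where
  "incident_pairs n i = {e \<in> all_pairs n. fst e = i \<or> snd e = i}"

lemma sum_incident_pairs:
  assumes i: "i < n" and sym: "\<And>a b. a < n \<Longrightarrow> b < n \<Longrightarrow> W (x a) (x b) = W (x b) (x a)"
  shows "(\<Sum>e\<in>incident_pairs n i. W (x (fst e)) (x (snd e))) = (\<Sum>j\<in>{..<n} - {i}. W (x i) (x j))"
proof -
  let ?pair = "\<lambda>j. (min i j, max i j)"
  have "bij_betw ?pair ({..<n} - {i}) (incident_pairs n i)"
  proof (rule bij_betwI')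
    fix e assume "e \<in> incident_pairs n i"
    then obtain a b where e: "e = (a, b)" "a < b" "b < n" "a = i \<or> b = i"
      by (auto simp: incident_pairs_def all_pairs_def)
    show "\<exists>j\<in>{..<n} - {i}. e = ?pair j"
      using e by (intro bexI[of _ "if a = i then b else a"]) (auto simp: min_def max_def)
  qed (use i in \<open>auto simp: incident_pairs_def all_pairs_def min_def max_def\<close>)
  then have "(\<Sum>e\<in>incident_pairs n i. W (x (fst e)) (x (snd e)))
      = (\<Sum>j\<in>{..<n} - {i}. W (x (fst (?pair j))) (x (snd (?pair j))))"
    by (rule sum.reindex_bij_betw[symmetric])
  also have "\<dots> = (\<Sum>j\<in>{..<n} - {i}. W (x i) (x j))"
    using sym i by (intro sum.cong refl) (auto simp: min_def max_def)
  finally show ?thesis .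
qed

section \<open>Hamiltonicity given the types\<close>

definition ham_cond_prob :: "('a \<Rightarrow> 'a \<Rightarrow> real) \<Rightarrow> nat \<Rightarrow> (nat \<Rightarrow> 'a) \<Rightarrow> real" where
  "ham_cond_prob W n x = (\<Sum>E \<in> {E. E \<subseteq> all_pairs n \<and> hamiltonian n E}. graph_prob W n x E)"

lemma ham_cond_prob_bounds:
  assumes "\<And>i j. i < n \<Longrightarrow> j < n \<Longrightarrow> 0 \<le> W (x i) (x j) \<and> W (x i) (x j) \<le> 1"
  shows "0 \<le> ham_cond_prob W n x" "ham_cond_prob W n x \<le> 1"
proof -
  have nonneg: "0 \<le> graph_prob W n x E" for E
    unfolding graph_prob_eq_bernoulli_subset_prob using assms
    by (intro bernoulli_subset_prob_nonneg) (auto simp: all_pairs_def)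
  then show "0 \<le> ham_cond_prob W n x" unfolding ham_cond_prob_def by (intro sum_nonneg) auto
  have "ham_cond_prob W n x \<le> (\<Sum>E\<in>Pow (all_pairs n). graph_prob W n x E)"
    unfolding ham_cond_prob_def using nonneg finite_all_pairs by (intro sum_mono2) auto
  also have "\<dots> = 1"
    unfolding graph_prob_eq_bernoulli_subset_prob by (rule sum_bernoulli_subset_prob[OF finite_all_pairs])
  finally show "ham_cond_prob W n x \<le> 1" .
qed

lemma ham_cond_prob_eq_0:
  assumes "\<not> cycle_avoids n {(u, v). W u v = 0} x"
    and "\<And>i j. i < n \<Longrightarrow> j < n \<Longrightarrow> W (x i) (x j) = W (x j) (x i)"
  shows "ham_cond_prob W n x = 0"
  unfolding ham_cond_prob_def using hamiltonian_cycle_avoids_zero assms by (intro sum.neutral) blast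

text \<open>By the Weierstrass product inequality, a lower bound on the probability, over the random
  edges, that vertex \<open>i\<close> has type in \<open>D\<close> and is isolated.\<close>
definition isolation_bound :: "('a \<Rightarrow> 'a \<Rightarrow> real) \<Rightarrow> 'a set \<Rightarrow> nat \<Rightarrow> (nat \<Rightarrow> 'a) \<Rightarrow> nat \<Rightarrow> real" where
  "isolation_bound W D n x i = indicator D (x i) * (1 - (\<Sum>j\<in>{..<n} - {i}. W (x i) (x j)))"

lemma sum_graph_prob_isolated_ge:
  assumes sym: "\<And>a b. a < n \<Longrightarrow> b < n \<Longrightarrow> W (x a) (x b) = W (x b) (x a)"
    and bounds: "\<And>a b. a < n \<Longrightarrow> b < n \<Longrightarrow> 0 \<le> W (x a) (x b) \<and> W (x a) (x b) \<le> 1"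
  shows "(\<Sum>i<n. isolation_bound W D n x i)
    \<le> (\<Sum>E\<in>Pow (all_pairs n). graph_prob W n x E *
          (\<Sum>i<n. indicator D (x i) * of_bool (E \<inter> incident_pairs n i = {})))"
proof -
  define w where "w e = W (x (fst e)) (x (snd e))" for e
  have w: "0 \<le> w e \<and> w e \<le> 1" if "e \<in> all_pairs n" for e
    using that bounds by (auto simp: w_def all_pairs_def)
  have sub: "incident_pairs n i \<subseteq> all_pairs n" for i by (auto simp: incident_pairs_def)
  have "(\<Sum>i<n. isolation_bound W D n x i)
      = (\<Sum>i<n. indicator D (x i) * (1 - (\<Sum>e\<in>incident_pairs n i. w e)))"
    unfolding w_def isolation_bound_def using sym by (intro sum.cong refl) (simp add: sum_incident_pairs)
  also have "\<dots> \<le> (\<Sum>i<n. indicator D (x i) * (\<Prod>e\<in>incident_pairs n i. 1 - w e))"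
    using w sub finite_subset[OF sub finite_all_pairs]
    by (intro sum_mono mult_left_mono one_minus_sum_le_prod_one_minus) auto
  also have "\<dots> = (\<Sum>i<n. indicator D (x i) *
      (\<Sum>E\<in>Pow (all_pairs n). if E \<inter> incident_pairs n i = {} then graph_prob W n x E else 0))"
    unfolding graph_prob_eq_bernoulli_subset_prob w_def[symmetric]
    by (simp add: sum_bernoulli_subset_prob_avoiding[OF finite_all_pairs sub])
  also have "\<dots> = (\<Sum>i<n. \<Sum>E\<in>Pow (all_pairs n).
      graph_prob W n x E * (indicator D (x i) * of_bool (E \<inter> incident_pairs n i = {})))"
    by (simp only: sum_distrib_left) (intro sum.cong refl; simp)
  also have "\<dots> = (\<Sum>E\<in>Pow (all_pairs n). \<Sum>i<n.
      graph_prob W n x E * (indicator D (x i) * of_bool (E \<inter> incident_pairs n i = {})))"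
    by (rule sum.swap)
  also have "\<dots> = (\<Sum>E\<in>Pow (all_pairs n). graph_prob W n x E *
      (\<Sum>i<n. indicator D (x i) * of_bool (E \<inter> incident_pairs n i = {})))"
    by (simp only: sum_distrib_left)
  finally show ?thesis .
qed

lemma ham_cond_prob_le_isolated:
  assumes sym: "\<And>a b. a < n \<Longrightarrow> b < n \<Longrightarrow> W (x a) (x b) = W (x b) (x a)"
    and bounds: "\<And>a b. a < n \<Longrightarrow> b < n \<Longrightarrow> 0 \<le> W (x a) (x b) \<and> W (x a) (x b) \<le> 1"
    and t: "0 < t"
  shows "ham_cond_prob W n x \<le> ((\<Sum>i<n. indicator D (x i))\<^sup>2
      - 2 * t * (\<Sum>i<n. isolation_bound W D n x i) + t\<^sup>2) / t\<^sup>2"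
proof -
  define P where "P = Pow (all_pairs n)"
  define gp where "gp E = graph_prob W n x E" for E
  define Z where "Z E = (\<Sum>i<n. indicator D (x i) * of_bool (E \<inter> incident_pairs n i = {}) :: real)" for E
  define cD where "cD = (\<Sum>i<n. indicator D (x i) :: real)"
  have finP: "finite P" by (simp add: P_def finite_all_pairs)
  have gp_nonneg: "0 \<le> gp E" for E
    unfolding gp_def graph_prob_eq_bernoulli_subset_prob using bounds
    by (intro bernoulli_subset_prob_nonneg) (auto simp: all_pairs_def)
  have gp_sum: "(\<Sum>E\<in>P. gp E) = 1"
    unfolding gp_def P_def graph_prob_eq_bernoulli_subset_prob
    by (rule sum_bernoulli_subset_prob[OF finite_all_pairs])
  have Z_ham: "Z E = 0" if "E \<in> {E. E \<subseteq> all_pairs n \<and> hamiltonian n E}" for E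
  proof -
    have "E \<inter> incident_pairs n i \<noteq> {}" if "i < n" for i
      using hamiltonian_incident[of n E i] that \<open>E \<in> _\<close> by (auto simp: incident_pairs_def)
    then show ?thesis unfolding Z_def by (intro sum.neutral) auto
  qed
  have Z_bounds: "0 \<le> Z E" "Z E \<le> cD" for E
    unfolding Z_def cD_def by (intro sum_nonneg sum_mono; simp add: indicator_def)+
  have "ham_cond_prob W n x \<le> (\<Sum>E\<in>P. gp E * (Z E - t)\<^sup>2) / t\<^sup>2"
    unfolding ham_cond_prob_def gp_def[symmetric]
    using finP gp_nonneg Z_ham t by (intro sum_vanishing_le_second_moment) (auto simp: P_def)
  also have "(\<Sum>E\<in>P. gp E * (Z E - t)\<^sup>2) = (\<Sum>E\<in>P. gp E * (Z E)\<^sup>2) - 2 * t * (\<Sum>E\<in>P. gp E * Z E) + t\<^sup>2"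
    using gp_sum by (simp add: power2_diff algebra_simps sum.distrib sum_subtractf sum_distrib_left
        flip: sum_distrib_right)
  also have "\<dots> \<le> cD\<^sup>2 - 2 * t * (\<Sum>i<n. isolation_bound W D n x i) + t\<^sup>2"
  proof -
    have "(\<Sum>E\<in>P. gp E * (Z E)\<^sup>2) \<le> (\<Sum>E\<in>P. gp E * cD\<^sup>2)"
      using gp_nonneg Z_bounds by (intro sum_mono mult_left_mono power_mono) auto
    then have "(\<Sum>E\<in>P. gp E * (Z E)\<^sup>2) \<le> cD\<^sup>2" using gp_sum by (simp flip: sum_distrib_right)
    moreover have "(\<Sum>i<n. isolation_bound W D n x i) \<le> (\<Sum>E\<in>P. gp E * Z E)"
      unfolding P_def gp_def Z_def by (rule sum_graph_prob_isolated_ge[of n W x D, OF sym bounds])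
    ultimately show ?thesis using t by (smt (verit) mult_left_mono)
  qed
  finally show ?thesis using t by (simp add: cD_def divide_right_mono)
qed

section \<open>Independent types\<close>

context prob_space
begin

abbreviation samples :: "nat \<Rightarrow> (nat \<Rightarrow> 'a) measure" where
  "samples n \<equiv> PiM {..<n} (\<lambda>_. M)"

lemma prob_space_samples: "prob_space (samples n)"
  by (intro prob_space_PiM) (simp add: prob_space_axioms)

lemma samples_component_in_space: "x \<in> space (samples n) \<Longrightarrow> i < n \<Longrightarrow> x i \<in> space M"
  by (auto simp: space_PiM PiE_iff)

lemma measurable_samples_pair[measurable]:
  "i < n \<Longrightarrow> j < n \<Longrightarrow> (\<lambda>x. (x i, x j)) \<in> samples n \<rightarrow>\<^sub>M M \<Otimes>\<^sub>M M"
  by measurable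

lemma distr_samples_pair:
  assumes "i < n" "j < n" "i \<noteq> j"
  shows "distr (samples n) (M \<Otimes>\<^sub>M M) (\<lambda>x. (x i, x j)) = M \<Otimes>\<^sub>M M"
proof (rule pair_measure_eqI[symmetric])
  show "sigma_finite_measure M" by unfold_locales
  fix A B assume A: "A \<in> sets M" and B: "B \<in> sets M"
  let ?AB = "\<lambda>k. if k = i then A else B"
  have "(\<lambda>x. (x i, x j)) -` (A \<times> B) \<inter> space (samples n) =
      prod_emb {..<n} (\<lambda>_. M) {i, j} (Pi\<^sub>E {i, j} ?AB)"
    using assms by (auto simp: prod_emb_def space_PiM PiE_iff)
  then have "emeasure (distr (samples n) (M \<Otimes>\<^sub>M M) (\<lambda>x. (x i, x j))) (A \<times> B)
      = emeasure (samples n) (prod_emb {..<n} (\<lambda>_. M) {i, j} (Pi\<^sub>E {i, j} ?AB))"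
    using assms A B by (simp add: emeasure_distr)
  also have "\<dots> = (\<Prod>k\<in>{i, j}. emeasure M (?AB k))"
    using assms A B by (intro emeasure_PiM_emb) (auto simp: prob_space_axioms)
  finally show "emeasure M A * emeasure M B =
      emeasure (distr (samples n) (M \<Otimes>\<^sub>M M) (\<lambda>x. (x i, x j))) (A \<times> B)"
    using assms by simp
qed (simp_all add: sigma_finite_measure_axioms)

lemma distr_samples_component: "i < n \<Longrightarrow> distr (samples n) M (\<lambda>x. x i) = M"
  using distr_PiM_component[of "{..<n}" "\<lambda>_. M" i] prob_space_axioms by simp

lemma integral_samples_component:
  fixes g :: "'a \<Rightarrow> real"
  assumes "i < n" "g \<in> borel_measurable M"
  shows "(\<integral>x. g (x i) \<partial>samples n) = integral\<^sup>L M g"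
  using integral_distr[of "\<lambda>x. x i" "samples n" M g] assms by (simp add: distr_samples_component)

lemma integral_samples_pair:
  fixes g :: "'a \<times> 'a \<Rightarrow> real"
  assumes "i < n" "j < n" "i \<noteq> j" "g \<in> borel_measurable (M \<Otimes>\<^sub>M M)"
  shows "(\<integral>x. g (x i, x j) \<partial>samples n) = integral\<^sup>L (M \<Otimes>\<^sub>M M) g"
  using integral_distr[OF measurable_samples_pair[OF assms(1,2)] assms(4)]
  by (simp add: distr_samples_pair[OF assms(1-3)])

lemma integrable_pair_bounded:
  fixes f :: "'a \<times> 'a \<Rightarrow> real"
  assumes "f \<in> borel_measurable (M \<Otimes>\<^sub>M M)" "\<And>p. p \<in> space (M \<Otimes>\<^sub>M M) \<Longrightarrow> \<bar>f p\<bar> \<le> B"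
  shows "integrable (M \<Otimes>\<^sub>M M) f"
proof -
  interpret pair_prob_space M M by unfold_locales
  show ?thesis using assms by (intro P.integrable_const_bound[where B=B]) auto
qed

lemma AE_samples_pairs:
  assumes "AE p in M \<Otimes>\<^sub>M M. R p"
  shows "AE x in samples n. \<forall>i<n. \<forall>j<n. i \<noteq> j \<longrightarrow> R (x i, x j)"
proof -
  have "AE x in samples n. R (x i, x j)" if "i < n" "j < n" "i \<noteq> j" for i j
  proof -
    have "AE p in distr (samples n) (M \<Otimes>\<^sub>M M) (\<lambda>x. (x i, x j)). R p"
      by (subst distr_samples_pair[OF that]) (rule assms)
    then show ?thesis using AE_distrD measurable_samples_pair that by blast
  qed
  then have "AE x in samples n. \<forall>ij\<in>{..<n} \<times> {..<n}. fst ij \<noteq> snd ij \<longrightarrow> R (x (fst ij), x (snd ij))"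
    by (intro AE_finite_allI) auto
  then show ?thesis by eventually_elim auto
qed

lemma measure_samples_PiE:
  assumes "\<And>i. i < n \<Longrightarrow> A i \<in> sets M"
  shows "measure (samples n) (Pi\<^sub>E {..<n} A) = (\<Prod>i<n. measure M (A i))"
proof -
  interpret finite_product_prob_space "\<lambda>_. M" "{..<n}" by unfold_locales simp
  show ?thesis using assms by (intro finite_measure_PiM_emb) auto
qed

lemma sets_samples_PiE: "(\<And>i. i < n \<Longrightarrow> A i \<in> sets M) \<Longrightarrow> Pi\<^sub>E {..<n} A \<in> sets (samples n)"
  by (intro sets_PiM_I_finite) auto

lemma integrable_samples_bounded:
  fixes f :: "(nat \<Rightarrow> 'a) \<Rightarrow> real"
  assumes "f \<in> borel_measurable (samples n)" "\<And>x. x \<in> space (samples n) \<Longrightarrow> \<bar>f x\<bar> \<le> B"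
  shows "integrable (samples n) f"
proof -
  interpret samples: prob_space "samples n" by (rule prob_space_samples)
  show ?thesis using assms by (intro samples.integrable_const_bound[where B=B]) auto
qed

lemma integrable_samples_component:
  fixes f :: "'a \<Rightarrow> real"
  assumes "i < n" "integrable M f"
  shows "integrable (samples n) (\<lambda>x. f (x i))"
  using integrable_distr_eq[of "\<lambda>x. x i" "samples n" M f] assms by (simp add: distr_samples_component)

lemma integral_samples_product:
  fixes f g :: "'a \<Rightarrow> real"
  assumes "i < n" "j < n" "i \<noteq> j" and [simp]: "integrable M f" "integrable M g"
  shows "(\<integral>x. f (x i) * g (x j) \<partial>samples n) = integral\<^sup>L M f * integral\<^sup>L M g"
proof -
  interpret product_sigma_finite "\<lambda>_. M" by unfold_locales
  define h where "h k = (if k = i then f else if k = j then g else (\<lambda>_. 1))" for k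
  have "(\<Prod>k<n. h k (x k)) = (\<Prod>k<n. (if k = i then f (x k) else 1) * (if k = j then g (x k) else 1))" for x
    using assms(3) by (intro prod.cong) (auto simp: h_def)
  then have "(\<integral>x. f (x i) * g (x j) \<partial>samples n) = (\<integral>x. (\<Prod>k<n. h k (x k)) \<partial>samples n)"
    using assms(1,2) by (simp add: prod.distrib)
  also have "\<dots> = (\<Prod>k<n. integral\<^sup>L M (h k))"
    by (intro product_integral_prod) (auto simp: h_def)
  also have "\<dots> = (\<Prod>k<n. (if k = i then integral\<^sup>L M f else 1) * (if k = j then integral\<^sup>L M g else 1))"
    using assms(3) by (intro prod.cong) (auto simp: h_def prob_space)
  also have "\<dots> = integral\<^sup>L M f * integral\<^sup>L M g"
    using assms(1,2) by (simp add: prod.distrib)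
  finally show ?thesis .
qed

lemma integral_sum_samples:
  fixes f :: "'a \<Rightarrow> real"
  assumes "integrable M f"
  shows "(\<integral>x. (\<Sum>i<n. f (x i)) \<partial>samples n) = n * integral\<^sup>L M f"
  using assms by (simp add: integrable_samples_component integral_samples_component)

lemma integral_sum_samples_square_le:
  fixes f :: "'a \<Rightarrow> real"
  assumes f[measurable]: "f \<in> borel_measurable M" and bounded: "\<And>y. y \<in> space M \<Longrightarrow> \<bar>f y\<bar> \<le> B"
  shows "(\<integral>x. (\<Sum>i<n. f (x i))\<^sup>2 \<partial>samples n) \<le> n * (\<integral>y. (f y)\<^sup>2 \<partial>M) + (n * integral\<^sup>L M f)\<^sup>2"
proof -
  have int_f: "integrable M f" using bounded by (intro integrable_const_bound[where B=B]) auto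
  have "\<bar>f (x i) * f (x j)\<bar> \<le> B * B" if "x \<in> space (samples n)" "i < n" "j < n" for x i j
  proof -
    have "\<bar>f (x i)\<bar> \<le> B" "\<bar>f (x j)\<bar> \<le> B"
      using that bounded samples_component_in_space by blast+
    moreover have "0 \<le> B" using calculation(1) abs_ge_zero order_trans by blast
    ultimately show ?thesis unfolding abs_mult by (intro mult_mono) auto
  qed
  then have int_ij: "integrable (samples n) (\<lambda>x. f (x i) * f (x j))" if "i < n" "j < n" for i j
    using that by (intro integrable_samples_bounded[where B="B * B"]) auto
  have term_le: "(\<integral>x. f (x i) * f (x j) \<partial>samples n)
      \<le> (if i = j then (\<integral>y. (f y)\<^sup>2 \<partial>M) else 0) + (integral\<^sup>L M f)\<^sup>2" if "i < n" "j < n" for i j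
  proof (cases "i = j")
    case True
    then show ?thesis using that integral_samples_component[of i n "\<lambda>y. (f y)\<^sup>2"]
      by (simp add: power2_eq_square)
  next
    case False
    then show ?thesis using that integral_samples_product[OF that False int_f int_f]
      by (simp add: power2_eq_square)
  qed
  have "(\<integral>x. (\<Sum>i<n. f (x i))\<^sup>2 \<partial>samples n) = (\<integral>x. (\<Sum>i<n. \<Sum>j<n. f (x i) * f (x j)) \<partial>samples n)"
    by (simp add: power2_eq_square sum_product)
  also have "\<dots> = (\<Sum>i<n. (\<integral>x. (\<Sum>j<n. f (x i) * f (x j)) \<partial>samples n))"
    using int_ij by (intro Bochner_Integration.integral_sum integrable_sum) auto
  also have "\<dots> = (\<Sum>i<n. \<Sum>j<n. (\<integral>x. f (x i) * f (x j) \<partial>samples n))"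
    using int_ij by (intro sum.cong refl Bochner_Integration.integral_sum) auto
  also have "\<dots> \<le> (\<Sum>i<n. \<Sum>j<n. (if i = j then (\<integral>y. (f y)\<^sup>2 \<partial>M) else 0) + (integral\<^sup>L M f)\<^sup>2)"
    using term_le by (intro sum_mono) auto
  also have "\<dots> = n * (\<integral>y. (f y)\<^sup>2 \<partial>M) + (n * integral\<^sup>L M f)\<^sup>2"
    by (simp add: sum.distrib power_mult_distrib power2_eq_square algebra_simps)
  finally show ?thesis .
qed

lemma integrable_samples_sum_square:
  fixes f :: "'a \<Rightarrow> real"
  assumes f[measurable]: "f \<in> borel_measurable M" and bounded: "\<And>y. y \<in> space M \<Longrightarrow> \<bar>f y\<bar> \<le> B"
  shows "integrable (samples n) (\<lambda>x. (\<Sum>i<n. f (x i))\<^sup>2)"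
proof (rule integrable_samples_bounded[where B="(n * B)\<^sup>2"])
  fix x assume x: "x \<in> space (samples n)"
  have "\<bar>\<Sum>i<n. f (x i)\<bar> \<le> (\<Sum>i<n. B)"
    using bounded samples_component_in_space[OF x] by (intro order_trans[OF sum_abs] sum_mono) auto
  then have "\<bar>\<Sum>i<n. f (x i)\<bar> \<le> \<bar>n * B\<bar>" by simp
  then show "\<bar>(\<Sum>i<n. f (x i))\<^sup>2\<bar> \<le> (n * B)\<^sup>2" by (simp add: abs_le_square_iff)
qed simp

lemma integral_samples_count_square_le:
  assumes [measurable]: "D \<in> events"
  shows "(\<integral>x. (\<Sum>i<n. indicator D (x i))\<^sup>2 \<partial>samples n) \<le> n * prob D + (n * prob D)\<^sup>2"
proof -
  have "(\<lambda>y. (indicator D y :: real)\<^sup>2) = indicator D" by (auto simp: indicator_def)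
  then show ?thesis
    using integral_sum_samples_square_le[of "indicator D" 1 n] by (simp add: indicator_def)
qed

lemma prob_nonpos_le_second_moment:
  fixes Y :: "'a \<Rightarrow> real"
  assumes Y[measurable]: "Y \<in> borel_measurable M" and int_Y2: "integrable M (\<lambda>x. (Y x)\<^sup>2)" and t: "0 < t"
  shows "prob {x \<in> space M. Y x \<le> 0} \<le> (expectation (\<lambda>x. (Y x)\<^sup>2) - 2 * t * expectation Y + t\<^sup>2) / t\<^sup>2"
proof -
  have int_Y: "integrable M Y" using int_Y2 by (intro square_integrable_imp_integrable[OF Y])
  have expand: "(\<lambda>x. (Y x - t)\<^sup>2) = (\<lambda>x. ((Y x)\<^sup>2 - 2 * t * Y x) + t\<^sup>2)"
    by (simp add: power2_diff fun_eq_iff algebra_simps)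
  have int_sq: "integrable M (\<lambda>x. (Y x - t)\<^sup>2)"
    unfolding expand using int_Y int_Y2 by simp
  have "{x \<in> space M. Y x \<le> 0} \<subseteq> {x \<in> space M. t \<le> \<bar>Y x - t\<bar>}" using t by auto
  then have "prob {x \<in> space M. Y x \<le> 0} \<le> prob {x \<in> space M. t \<le> \<bar>Y x - t\<bar>}"
    by (rule finite_measure_mono) measurable
  also have "\<dots> \<le> expectation (\<lambda>x. (Y x - t)\<^sup>2) / t\<^sup>2"
    by (rule second_moment_method[OF _ int_sq t]) measurable
  also have "expectation (\<lambda>x. (Y x - t)\<^sup>2) = expectation (\<lambda>x. (Y x)\<^sup>2) - 2 * t * expectation Y + t\<^sup>2"
    unfolding expand using int_Y int_Y2 by (simp add: prob_space)
  finally show ?thesis .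
qed

lemma prob_sum_samples_nonpos_le:
  fixes f :: "'a \<Rightarrow> real"
  assumes f[measurable]: "f \<in> borel_measurable M" and bounded: "\<And>y. y \<in> space M \<Longrightarrow> \<bar>f y\<bar> \<le> 1"
    and mean: "0 < integral\<^sup>L M f" and n: "0 < n"
  shows "measure (samples n) {x \<in> space (samples n). (\<Sum>i<n. f (x i)) \<le> 0} \<le> 1 / (n * (integral\<^sup>L M f)\<^sup>2)"
proof -
  interpret samples: prob_space "samples n" by (rule prob_space_samples)
  define t where "t = n * integral\<^sup>L M f"
  have t: "0 < t" using mean n by (simp add: t_def)
  have int_f: "integrable M f" using bounded by (intro integrable_const_bound[where B=1]) auto
  have "(\<integral>y. (f y)\<^sup>2 \<partial>M) \<le> (\<integral>y. 1 \<partial>M)"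
    using bounded by (intro integral_mono integrable_const_bound[where B=1]) (auto simp: abs_square_le_1)
  then have f2: "(\<integral>y. (f y)\<^sup>2 \<partial>M) \<le> 1" by (simp add: prob_space)
  have second: "(\<integral>x. (\<Sum>i<n. f (x i))\<^sup>2 \<partial>samples n) \<le> n + t\<^sup>2"
    using integral_sum_samples_square_le[OF f bounded, of n] mult_left_le[OF f2, of "real n"]
    by (simp add: t_def)
  have first: "(\<integral>x. (\<Sum>i<n. f (x i)) \<partial>samples n) = t"
    using int_f by (simp add: integral_sum_samples t_def)
  have "integrable (samples n) (\<lambda>x. (\<Sum>i<n. f (x i))\<^sup>2)"
    by (rule integrable_samples_sum_square[OF f bounded])
  then have "measure (samples n) {x \<in> space (samples n). (\<Sum>i<n. f (x i)) \<le> 0}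
      \<le> ((\<integral>x. (\<Sum>i<n. f (x i))\<^sup>2 \<partial>samples n) - 2 * t * t + t\<^sup>2) / t\<^sup>2"
    using samples.prob_nonpos_le_second_moment[of "\<lambda>x. \<Sum>i<n. f (x i)" t] t first by simp
  also have "\<dots> \<le> (n + t\<^sup>2 - 2 * t * t + t\<^sup>2) / t\<^sup>2"
    using second by (intro divide_right_mono) auto
  also have "\<dots> = 1 / (n * (integral\<^sup>L M f)\<^sup>2)"
    using t n by (simp add: t_def field_simps power2_eq_square)
  finally show ?thesis .
qed

lemma measure_samples_card_eq:
  assumes S: "S \<in> sets M"
  shows "measure (samples n) {x \<in> space (samples n). card {i. i < n \<and> x i \<in> S} = k}
    = (n choose k) * prob S ^ k * prob (space M - S) ^ (n - k)"
proof -
  define F where "F = {K. K \<subseteq> {..<n} \<and> card K = k}"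
  define box where "box K = Pi\<^sub>E {..<n} (\<lambda>i. if i \<in> K then S else space M - S)" for K
  have box_eq: "box K = {x \<in> space (samples n). {i. i < n \<and> x i \<in> S} = K}" if K: "K \<subseteq> {..<n}" for K
  proof (intro set_eqI iffI)
    fix x assume x: "x \<in> box K"
    have "box K \<subseteq> space (samples n)"
      unfolding box_def space_PiM using sets.sets_into_space[OF S] by (intro PiE_mono) auto
    then have "x \<in> space (samples n)" using x by blast
    moreover have "x i \<in> S \<longleftrightarrow> i \<in> K" if "i < n" for i
      using PiE_mem[OF x[unfolded box_def], of i] that by (auto split: if_splits)
    then have "{i. i < n \<and> x i \<in> S} = K" using K by auto
    ultimately show "x \<in> {x \<in> space (samples n). {i. i < n \<and> x i \<in> S} = K}" by simp
  qed (auto simp: box_def space_PiM PiE_iff)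
  have "(\<Union>K\<in>F. box K) = (\<Union>K\<in>F. {x \<in> space (samples n). {i. i < n \<and> x i \<in> S} = K})"
    by (intro SUP_cong refl) (simp add: box_eq F_def)
  then have "{x \<in> space (samples n). card {i. i < n \<and> x i \<in> S} = k} = (\<Union>K\<in>F. box K)"
    by (auto simp: F_def)
  moreover have "disjoint_family_on box F"
    by (auto simp: disjoint_family_on_def box_eq F_def)
  moreover have "measure (samples n) (box K) = prob S ^ k * prob (space M - S) ^ (n - k)" if "K \<in> F" for K
  proof -
    have K: "K \<subseteq> {..<n}" "finite K" "card K = k" using that by (auto simp: F_def finite_subset)
    have "measure (samples n) (box K) = (\<Prod>i<n. if i \<in> K then prob S else prob (space M - S))"
      unfolding box_def using S by (subst measure_samples_PiE) (auto intro!: prod.cong)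
    also have "\<dots> = prob S ^ card K * prob (space M - S) ^ card ({..<n} - K)"
      using K by (simp add: prod.If_cases Int_absorb1 Diff_eq)
    finally show ?thesis using K by (simp add: card_Diff_subset)
  qed
  moreover have "finite F" unfolding F_def by (rule finite_subset[of _ "Pow {..<n}"]) auto
  moreover have "box ` F \<subseteq> sets (samples n)" using S by (auto simp: box_def intro!: sets_samples_PiE)
  moreover have "emeasure (samples n) (box K) \<noteq> \<top>" for K
    using finite_measure.emeasure_finite[OF prob_space.finite_measure[OF prob_space_samples]] .
  ultimately show ?thesis
    using measure_finite_Union[of F box "samples n"] n_subsets[of "{..<n}" k]
    by (simp add: F_def mult.assoc)
qed

end

section \<open>Two elementary estimates\<close>

lemma central_binomial_recurrence: "Suc m * ((2 * Suc m) choose Suc m) = 2 * (2*m + 1) * ((2*m) choose m)"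
  by (metis (lifting) ext Suc_eq_plus1 Suc_times_binomial_add add_2_eq_Suc
    add_mult_distrib binomial_absorption diff_Suc_1 mult_Suc_right mult_numeral_1)

lemma central_binomial_square_le: "(real ((2*m) choose m))\<^sup>2 * (2*m + 1) \<le> 16 ^ m"
proof (induction m)
  case (Suc m)
  define C C' where "C = (2*m) choose m" and "C' = (2 * Suc m) choose Suc m"
  define r c c' where "r = real m" and "c = real C" and "c' = real C'"
  have "Suc m * C' = 2 * (2*m + 1) * C" unfolding C_def C'_def by (rule central_binomial_recurrence)
  then have "real (Suc m * C') = real (2 * (2*m + 1) * C)" by (simp only:)
  then have "(r + 1) * c' = 2 * (2*r + 1) * c" by (simp add: r_def c_def c'_def algebra_simps)
  note rec = this
  have "(r + 1)\<^sup>2 * (c'\<^sup>2 * (2*r + 3)) = ((r + 1) * c')\<^sup>2 * (2*r + 3)"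
    by (simp add: power_mult_distrib)
  also have "\<dots> = ((2*r + 1) * c\<^sup>2) * (4 * (2*r + 1) * (2*r + 3))"
    unfolding rec by (simp add: power2_eq_square algebra_simps)
  also have "\<dots> \<le> 16 ^ m * (16 * (r + 1)\<^sup>2)"
  proof (rule mult_mono)
    show "(2*r + 1) * c\<^sup>2 \<le> 16 ^ m" using Suc.IH by (simp add: r_def c_def C_def algebra_simps)
    show "4 * (2*r + 1) * (2*r + 3) \<le> 16 * (r + 1)\<^sup>2" by (simp add: power2_eq_square algebra_simps)
  qed (simp_all add: r_def)
  finally have "(r + 1)\<^sup>2 * (c'\<^sup>2 * (2*r + 3)) \<le> (r + 1)\<^sup>2 * (16 * 16 ^ m)"
    by (simp add: mult_ac)
  then have "c'\<^sup>2 * (2*r + 3) \<le> 16 * 16 ^ m"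
    by (rule mult_left_le_imp_le) (simp add: r_def)
  then show ?case by (simp add: r_def c'_def C'_def algebra_simps del: binomial_Suc_Suc)
qed simp

lemma central_binomial_le: "real ((2*m) choose m) / 4 ^ m \<le> 1 / sqrt (2*m + 1)"
proof -
  have "real ((2*m) choose m) * sqrt (2*m + 1) = sqrt ((real ((2*m) choose m))\<^sup>2 * (2*m + 1))"
    by (simp add: real_sqrt_mult)
  also have "\<dots> \<le> sqrt (16 ^ m)" using central_binomial_square_le by simp
  also have "\<dots> = 4 ^ m" by (simp add: real_sqrt_power)
  finally show ?thesis by (simp add: field_simps)
qed

lemma low_degree_bound_lt:
  fixes \<epsilon> \<delta> X :: real
  assumes \<delta>: "0 < \<delta>" and \<epsilon>: "0 < \<epsilon>" "\<epsilon> \<le> 1/4" "\<epsilon> \<le> \<delta>/8" and X: "4/\<delta> + 1 \<le> X"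
  shows "(X + X\<^sup>2) / (X * (1 - \<epsilon>))\<^sup>2 - 1 < \<delta>"
proof -
  define q where "q = (1 - \<epsilon>)\<^sup>2"
  have X0: "0 < X" using X \<delta> by (smt (verit) divide_pos_pos)
  have q: "1/2 \<le> q"
  proof -
    have "(3/4)\<^sup>2 \<le> (1 - \<epsilon>)\<^sup>2" using \<epsilon> by (intro power_mono) auto
    then show ?thesis unfolding q_def by (simp add: power2_eq_square)
  qed
  have "(X * (1 - \<epsilon>))\<^sup>2 = X\<^sup>2 * q" by (simp add: q_def power_mult_distrib)
  then have "(X + X\<^sup>2) / (X * (1 - \<epsilon>))\<^sup>2 - 1 = (1 / X) / q + (1 / q - 1)"
    using X0 q by (simp add: field_simps power2_eq_square)
  moreover have "(1 / X) / q \<le> 2 / X" using q X0 by (simp add: field_simps)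
  moreover have "2 / X < \<delta> / 2"
  proof -
    have "4 < X * \<delta>" using X \<delta> by (simp add: field_simps)
    then show ?thesis using X0 \<delta> by (simp add: field_simps)
  qed
  moreover have "1 / q - 1 \<le> 4 * \<epsilon>"
  proof -
    have "(1 + 4 * \<epsilon>) * q - 1 = \<epsilon> * (2 - 7 * \<epsilon> + 4 * \<epsilon>\<^sup>2)"
      unfolding q_def by (simp add: power2_eq_square algebra_simps)
    moreover have "0 \<le> \<epsilon> * (2 - 7 * \<epsilon> + 4 * \<epsilon>\<^sup>2)"
      using \<epsilon> zero_le_power2[of \<epsilon>] by (intro mult_nonneg_nonneg) linarith+
    ultimately have "1 \<le> (1 + 4 * \<epsilon>) * q" by linarith
    then have "1 / q \<le> 1 + 4 * \<epsilon>" using q by (simp add: divide_le_eq mult.commute)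
    then show ?thesis by simp
  qed
  ultimately show ?thesis using \<epsilon> by linarith
qed

section \<open>The graphon model\<close>

locale graphon_model = prob_space M for M :: "'a measure" +
  fixes W :: "'a \<Rightarrow> 'a \<Rightarrow> real"
  assumes graphon: "graphon M W"
begin

lemma measurable_W[measurable]: "(\<lambda>p. W (fst p) (snd p)) \<in> borel_measurable (M \<Otimes>\<^sub>M M)"
  using graphon by (simp add: graphon_def)

lemma W_sym: "x \<in> space M \<Longrightarrow> y \<in> space M \<Longrightarrow> W x y = W y x"
  and W_nonneg: "x \<in> space M \<Longrightarrow> y \<in> space M \<Longrightarrow> 0 \<le> W x y"
  and W_le_1: "x \<in> space M \<Longrightarrow> y \<in> space M \<Longrightarrow> W x y \<le> 1"
  using graphon by (simp_all add: graphon_def)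

lemma W_abs_le_1: "x \<in> space M \<Longrightarrow> y \<in> space M \<Longrightarrow> \<bar>W x y\<bar> \<le> 1"
  using W_nonneg W_le_1 by fastforce

lemma measurable_W_samples[measurable]:
  "i < n \<Longrightarrow> j < n \<Longrightarrow> (\<lambda>x. W (x i) (x j)) \<in> borel_measurable (samples n)"
  using measurable_compose[OF measurable_samples_pair measurable_W] by simp

lemma W_samples_bounds:
  "x \<in> space (samples n) \<Longrightarrow> i < n \<Longrightarrow> j < n \<Longrightarrow> 0 \<le> W (x i) (x j) \<and> W (x i) (x j) \<le> 1"
  by (auto intro!: W_nonneg W_le_1 samples_component_in_space)

lemma measurable_ham_cond_prob[measurable]: "ham_cond_prob W n \<in> borel_measurable (samples n)"
proof -
  have "(\<lambda>x. graph_prob W n x E) \<in> borel_measurable (samples n)" for E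
    unfolding graph_prob_def by (intro borel_measurable_prod) (auto simp: all_pairs_def)
  then show ?thesis unfolding ham_cond_prob_def[abs_def] by measurable
qed

lemma ham_cond_prob_samples_bounds:
  "x \<in> space (samples n) \<Longrightarrow> 0 \<le> ham_cond_prob W n x \<and> ham_cond_prob W n x \<le> 1"
  using ham_cond_prob_bounds[of n W x] W_samples_bounds by blast

lemma ham_prob_eq_integral: "ham_prob M W n = integral\<^sup>L (samples n) (ham_cond_prob W n)"
  by (simp add: ham_prob_def ham_cond_prob_def[abs_def])

lemma ham_prob_nonneg: "0 \<le> ham_prob M W n"
  unfolding ham_prob_eq_integral using ham_cond_prob_samples_bounds
  by (intro integral_nonneg_AE AE_I2) auto

lemma ham_prob_le_measure:
  assumes zero: "AE p in M \<Otimes>\<^sub>M M. p \<in> R \<longrightarrow> W (fst p) (snd p) = 0"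
    and C: "C \<in> sets (samples n)"
    and cycles: "\<And>x. x \<in> space (samples n) \<Longrightarrow> cycle_avoids n R x \<Longrightarrow> x \<in> C"
  shows "ham_prob M W n \<le> measure (samples n) C"
proof -
  have "AE x in samples n. ham_cond_prob W n x \<le> indicator C x"
    using AE_samples_pairs[OF zero, of n] AE_space
  proof eventually_elim
    case (elim x)
    have sym: "\<And>i j. i < n \<Longrightarrow> j < n \<Longrightarrow> W (x i) (x j) = W (x j) (x i)"
      using elim(2) by (intro W_sym samples_component_in_space) auto
    show ?case
    proof (cases "cycle_avoids n {(u, v). W u v = 0} x")
      case True
      then have "x \<in> C" using elim by (intro cycles cycle_avoids_mono[OF True]) auto
      then show ?thesis using ham_cond_prob_samples_bounds[OF elim(2)] by simp
    next
      case False
      then show ?thesis using ham_cond_prob_eq_0[OF False sym] by simp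
    qed
  qed
  then have "integral\<^sup>L (samples n) (ham_cond_prob W n) \<le> integral\<^sup>L (samples n) (indicator C)"
    using C ham_cond_prob_samples_bounds
    by (intro integral_mono_AE integrable_samples_bounded[where B=1]) auto
  then show ?thesis using C by (simp add: ham_prob_eq_integral)
qed

lemma ham_prob_le_disconnected:
  assumes S: "S \<in> sets M" and T: "T \<in> sets M" and cover: "S \<union> T = space M"
    and zero: "AE p in M \<Otimes>\<^sub>M M. p \<in> S \<times> T \<longrightarrow> W (fst p) (snd p) = 0"
  shows "ham_prob M W n \<le> prob S ^ n + prob T ^ n"
proof -
  let ?C = "Pi\<^sub>E {..<n} (\<lambda>_. S) \<union> Pi\<^sub>E {..<n} (\<lambda>_. T)"
  have "ham_prob M W n \<le> measure (samples n) ?C"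
  proof (rule ham_prob_le_measure[OF zero])
    show "?C \<in> sets (samples n)" using S T by (intro sets.Un sets_samples_PiE)
    fix x assume x: "x \<in> space (samples n)" and cycle: "cycle_avoids n (S \<times> T) x"
    have "\<forall>i<n. x i \<in> S \<union> T" using cover samples_component_in_space[OF x] by auto
    then have "(\<forall>i<n. x i \<in> S) \<or> (\<forall>i<n. x i \<in> T)"
      using cycle_avoids_all_in[OF cycle] by blast
    then show "x \<in> ?C" using x by (auto simp: space_PiM PiE_iff)
  qed
  also have "\<dots> \<le> measure (samples n) (Pi\<^sub>E {..<n} (\<lambda>_. S)) + measure (samples n) (Pi\<^sub>E {..<n} (\<lambda>_. T))"
    using S T by (intro measure_Un_le sets_samples_PiE)
  also have "\<dots> = prob S ^ n + prob T ^ n" using S T by (simp add: measure_samples_PiE)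
  finally show ?thesis .
qed

lemma ham_prob_le_peninsula:
  assumes A: "A \<in> sets M" and B: "B \<in> sets M"
    and zero: "AE p in M \<Otimes>\<^sub>M M. p \<in> A \<times> (A \<union> B) \<longrightarrow> W (fst p) (snd p) = 0"
    and heavier: "prob (space M - (A \<union> B)) < prob A" and n: "0 < n"
  shows "ham_prob M W n \<le> 1 / (n * (prob A - prob (space M - (A \<union> B)))\<^sup>2)"
proof -
  define C where "C = space M - (A \<union> B)"
  have C: "C \<in> sets M" using A B by (auto simp: C_def)
  define f where "f y = (indicator A y - indicator C y :: real)" for y
  have f[measurable]: "f \<in> borel_measurable M" using A C by (simp add: f_def[abs_def])
  have mean: "integral\<^sup>L M f = prob A - prob C"
    unfolding f_def using A C
    by (subst Bochner_Integration.integral_diff) (auto simp: integrable_indicator_iff less_top[symmetric])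
  have "ham_prob M W n \<le> measure (samples n) {x \<in> space (samples n). (\<Sum>i<n. f (x i)) \<le> 0}"
  proof (rule ham_prob_le_measure[OF zero])
    show "{x \<in> space (samples n). (\<Sum>i<n. f (x i)) \<le> 0} \<in> sets (samples n)" by measurable
    fix x assume x: "x \<in> space (samples n)" and cycle: "cycle_avoids n (A \<times> (A \<union> B)) x"
    have "\<forall>i<n. x i \<in> (A \<union> B) \<union> C" using samples_component_in_space[OF x] by (auto simp: C_def)
    then have "card {i. i < n \<and> x i \<in> A} \<le> card {i. i < n \<and> x i \<in> C}"
      by (rule cycle_avoids_card_le[OF cycle])
    then show "x \<in> {x \<in> space (samples n). (\<Sum>i<n. f (x i)) \<le> 0}"
      using x by (simp add: f_def sum_subtractf sum_indicator_eq_card_filter)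
  qed
  also have "\<dots> \<le> 1 / (n * (integral\<^sup>L M f)\<^sup>2)"
  proof (rule prob_sum_samples_nonpos_le[OF f _ _ n])
    show "0 < integral\<^sup>L M f" using heavier mean by (simp add: C_def)
  qed (auto simp: f_def indicator_def)
  finally show ?thesis by (simp add: mean C_def)
qed

lemma ham_prob_le_bipartite:
  assumes S: "S \<in> sets M" and half: "prob S = 1/2"
    and zero: "AE p in M \<Otimes>\<^sub>M M. p \<in> S \<times> S \<union> (space M - S) \<times> (space M - S) \<longrightarrow> W (fst p) (snd p) = 0"
  shows "ham_prob M W n \<le> 1 / sqrt (n + 1)"
proof -
  define T where "T = space M - S"
  let ?C = "{x \<in> space (samples n). 2 * card {i. i < n \<and> x i \<in> S} = n}"
  have "ham_prob M W n \<le> measure (samples n) ?C"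
  proof (rule ham_prob_le_measure[OF zero[folded T_def]])
    have "2 * c = n \<longleftrightarrow> 2 * real c = real n" for c
      using of_nat_eq_iff[of "2 * c" n, where 'a=real] by simp
    then have "?C = {x \<in> space (samples n). 2 * (\<Sum>i<n. indicator S (x i)) = real n}"
      by (simp add: sum_indicator_eq_card_filter)
    then show "?C \<in> sets (samples n)" using S by simp
    fix x assume x: "x \<in> space (samples n)" and cycle: "cycle_avoids n (S \<times> S \<union> T \<times> T) x"
    have "\<forall>i<n. x i \<in> S \<union> T" using samples_component_in_space[OF x] by (auto simp: T_def)
    then show "x \<in> ?C" using cycle_avoids_alternating_card[OF cycle] x by (auto simp: T_def)
  qed
  also have "\<dots> \<le> 1 / sqrt (n + 1)"
  proof (cases "even n")
    case True
    then obtain m where m: "n = 2 * m" by blast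
    have "measure (samples n) ?C = measure (samples n) {x \<in> space (samples n). card {i. i < n \<and> x i \<in> S} = m}"
      using m by (intro arg_cong[where f="measure (samples n)"]) auto
    also have "\<dots> = real ((2*m) choose m) * ((1/2) ^ m * (1/2) ^ m)"
      using measure_samples_card_eq[OF S, of n m] prob_compl[OF S] half m by (simp add: mult.assoc)
    also have "\<dots> = real ((2*m) choose m) / 4 ^ m"
      by (simp add: power_divide flip: power_mult_distrib)
    also have "\<dots> \<le> 1 / sqrt (n + 1)" using central_binomial_le[of m] m by simp
    finally show ?thesis .
  next
    case False
    then have "2 * c \<noteq> n" for c by auto
    then have empty: "?C = {}" by auto
    show ?thesis unfolding empty by simp
  qed
  finally show ?thesis .
qed

lemma measurable_deg[measurable]: "deg M W \<in> borel_measurable M"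
proof -
  have "case_prod W \<in> borel_measurable (M \<Otimes>\<^sub>M M)"
    using measurable_W by (simp add: case_prod_beta')
  then show ?thesis unfolding deg_def[abs_def] by (rule borel_measurable_lebesgue_integral)
qed

lemma sets_low_deg_set[measurable]: "low_deg_set M W a \<in> sets M"
  unfolding low_deg_set_def by measurable

lemma integral_samples_low_deg_edge_le:
  assumes ij: "i < n" "j < n" "i \<noteq> j"
  shows "(\<integral>x. indicator (low_deg_set M W a) (x i) * W (x i) (x j) \<partial>samples n)
    \<le> prob (low_deg_set M W a) * a"
proof -
  interpret pair_sigma_finite M M by unfold_locales
  define D where "D = low_deg_set M W a"
  have int: "integrable (M \<Otimes>\<^sub>M M) (\<lambda>(u, v). indicator D u * W u v)"
    by (rule integrable_pair_bounded[where B=1])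
       (auto simp: D_def space_pair_measure indicator_def case_prod_beta' intro!: W_abs_le_1)
  have "(\<integral>x. indicator D (x i) * W (x i) (x j) \<partial>samples n) = (\<integral>(u, v). indicator D u * W u v \<partial>(M \<Otimes>\<^sub>M M))"
    using integral_samples_pair[OF ij, of "\<lambda>(u, v). indicator D u * W u v"] by (simp add: D_def)
  also have "\<dots> = (\<integral>u. indicator D u * deg M W u \<partial>M)"
    using integral_fst'[OF int] by (simp add: deg_def)
  also have "\<dots> \<le> (\<integral>u. indicator D u * a \<partial>M)"
  proof (rule integral_mono)
    have "0 \<le> deg M W u \<and> deg M W u \<le> 1" if "u \<in> space M" for u
    proof -
      have "integrable M (W u)"
        using that measurable_Pair2[OF measurable_W that] W_nonneg W_le_1
        by (intro integrable_const_bound[where B=1]) auto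
      then show ?thesis
        using that W_nonneg W_le_1 integral_mono[of M "W u" "\<lambda>_. 1"]
        by (auto simp: deg_def prob_space intro!: integral_nonneg_AE)
    qed
    then show "integrable M (\<lambda>u. indicator D u * deg M W u)"
      by (intro integrable_const_bound[where B=1]) (auto simp: D_def indicator_def)
    show "integrable M (\<lambda>u. indicator D u * a)"
      by (intro integrable_mult_left) (simp add: D_def integrable_indicator_iff less_top[symmetric])
  qed (auto simp: D_def low_deg_set_def indicator_def)
  also have "\<dots> = prob D * a"
    using sets.Int_space_eq2[of D M] by (simp add: D_def)
  finally show ?thesis by (simp add: D_def)
qed

lemma integrable_samples_isolation_bound:
  assumes D[measurable]: "D \<in> sets M" and i: "i < n"
  shows "integrable (samples n) (\<lambda>x. isolation_bound W D n x i)"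
proof (rule integrable_samples_bounded[where B="1 + real n"])
  fix x assume x: "x \<in> space (samples n)"
  have "\<bar>\<Sum>j\<in>{..<n} - {i}. W (x i) (x j)\<bar> \<le> (\<Sum>j\<in>{..<n} - {i}. 1)"
    using x i W_samples_bounds by (intro order_trans[OF sum_abs] sum_mono) fastforce
  also have "\<dots> \<le> real n" using card_mono[of "{..<n}" "{..<n} - {i}"] by simp
  finally have "\<bar>1 - (\<Sum>j\<in>{..<n} - {i}. W (x i) (x j))\<bar> \<le> 1 + real n" by linarith
  then show "\<bar>isolation_bound W D n x i\<bar> \<le> 1 + real n"
    by (simp add: isolation_bound_def abs_mult indicator_def)
qed (use i in \<open>simp add: isolation_bound_def\<close>)

lemma integral_samples_isolation_bound_ge:
  assumes i: "i < n" and a: "0 \<le> a"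
  defines "D \<equiv> low_deg_set M W a"
  shows "prob D * (1 - n * a)
    \<le> (\<integral>x. isolation_bound W D n x i \<partial>samples n)"
proof -
  have int_edge: "integrable (samples n) (\<lambda>x. indicator D (x i) * W (x i) (x j))" if "j < n" for j
    using i that W_samples_bounds
    by (intro integrable_samples_bounded[where B=1]) (auto simp: D_def indicator_def)
  have "(\<integral>x. isolation_bound W D n x i \<partial>samples n)
      = (\<integral>x. indicator D (x i) - (\<Sum>j\<in>{..<n} - {i}. indicator D (x i) * W (x i) (x j)) \<partial>samples n)"
    by (simp only: isolation_bound_def right_diff_distrib sum_distrib_left mult_1_right)
  also have "\<dots> = (\<integral>x. indicator D (x i) \<partial>samples n)
      - (\<integral>x. (\<Sum>j\<in>{..<n} - {i}. indicator D (x i) * W (x i) (x j)) \<partial>samples n)"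
  proof (rule Bochner_Integration.integral_diff)
    show "integrable (samples n) (\<lambda>x. indicator D (x i) :: real)"
      using i by (intro integrable_samples_bounded[where B=1]) (auto simp: D_def)
    show "integrable (samples n) (\<lambda>x. \<Sum>j\<in>{..<n} - {i}. indicator D (x i) * W (x i) (x j))"
      using int_edge by (intro Bochner_Integration.integrable_sum) auto
  qed
  also have "(\<integral>x. (\<Sum>j\<in>{..<n} - {i}. indicator D (x i) * W (x i) (x j)) \<partial>samples n)
      = (\<Sum>j\<in>{..<n} - {i}. (\<integral>x. indicator D (x i) * W (x i) (x j) \<partial>samples n))"
    using int_edge by (intro Bochner_Integration.integral_sum) auto
  also have "(\<integral>x. indicator D (x i) \<partial>samples n) = prob D"
    using i by (simp add: integral_samples_component D_def)
  finally have eq: "(\<integral>x. isolation_bound W D n x i \<partial>samples n)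
      = prob D - (\<Sum>j\<in>{..<n} - {i}. (\<integral>x. indicator D (x i) * W (x i) (x j) \<partial>samples n))" .
  have "(\<Sum>j\<in>{..<n} - {i}. (\<integral>x. indicator D (x i) * W (x i) (x j) \<partial>samples n))
      \<le> (\<Sum>j\<in>{..<n} - {i}. prob D * a)"
    using i unfolding D_def by (intro sum_mono integral_samples_low_deg_edge_le) auto
  also have "\<dots> \<le> n * (prob D * a)"
    using a card_mono[of "{..<n}" "{..<n} - {i}"] by (simp add: mult_right_mono)
  finally show ?thesis using eq by (simp add: algebra_simps)
qed

lemma integral_samples_sum_isolation_bound_ge:
  assumes "0 \<le> a"
  defines "D \<equiv> low_deg_set M W a"
  shows "n * prob D * (1 - n * a)
    \<le> (\<integral>x. (\<Sum>i<n. isolation_bound W D n x i) \<partial>samples n)"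
proof -
  have "n * prob D * (1 - n * a)
      \<le> (\<Sum>i<n. (\<integral>x. isolation_bound W D n x i \<partial>samples n))"
  proof -
    have "(\<Sum>i<n. prob D * (1 - n * a))
        \<le> (\<Sum>i<n. (\<integral>x. isolation_bound W D n x i \<partial>samples n))"
      unfolding D_def using assms(1) by (intro sum_mono integral_samples_isolation_bound_ge) auto
    then show ?thesis by simp
  qed
  also have "\<dots> = (\<integral>x. (\<Sum>i<n. isolation_bound W D n x i) \<partial>samples n)"
    by (intro Bochner_Integration.integral_sum[symmetric] integrable_samples_isolation_bound)
       (auto simp: D_def)
  finally show ?thesis .
qed

lemma ham_prob_le_low_degree:
  assumes eps: "0 < \<epsilon>" "\<epsilon> < 1" and n: "0 < n"
    and pos: "0 < prob (low_deg_set M W (\<epsilon> / n))"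
  defines "\<mu> \<equiv> prob (low_deg_set M W (\<epsilon> / n))"
  shows "ham_prob M W n \<le> (n * \<mu> + (n * \<mu>)\<^sup>2) / (n * \<mu> * (1 - \<epsilon>))\<^sup>2 - 1"
proof -
  interpret samples: prob_space "samples n" by (rule prob_space_samples)
  define D where "D = low_deg_set M W (\<epsilon> / n)"
  define t where "t = n * \<mu> * (1 - \<epsilon>)"
  define cD where "cD x = (\<Sum>i<n. indicator D (x i) :: real)" for x
  define L where "L x = (\<Sum>i<n. isolation_bound W D n x i)" for x
  have t: "0 < t" using eps n pos by (simp add: t_def \<mu>_def)
  have int_cD2: "integrable (samples n) (\<lambda>x. (cD x)\<^sup>2)"
    unfolding cD_def by (rule integrable_samples_sum_square[where B=1]) (simp add: D_def, simp)
  have int_L: "integrable (samples n) L"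
    unfolding L_def[abs_def]
    by (intro Bochner_Integration.integrable_sum integrable_samples_isolation_bound) (auto simp: D_def)
  have "ham_prob M W n \<le> (\<integral>x. ((cD x)\<^sup>2 - 2 * t * L x + t\<^sup>2) / t\<^sup>2 \<partial>samples n)"
    unfolding ham_prob_eq_integral
  proof (rule integral_mono)
    show "integrable (samples n) (ham_cond_prob W n)"
      using ham_cond_prob_samples_bounds by (intro integrable_samples_bounded[where B=1]) auto
    show "integrable (samples n) (\<lambda>x. ((cD x)\<^sup>2 - 2 * t * L x + t\<^sup>2) / t\<^sup>2)"
      using int_cD2 int_L by simp
    fix x assume x: "x \<in> space (samples n)"
    show "ham_cond_prob W n x \<le> ((cD x)\<^sup>2 - 2 * t * L x + t\<^sup>2) / t\<^sup>2"
      unfolding cD_def L_def using x t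
      by (intro ham_cond_prob_le_isolated W_samples_bounds) (auto intro!: W_sym samples_component_in_space)
  qed
  also have "\<dots> = ((\<integral>x. (cD x)\<^sup>2 \<partial>samples n) - 2 * t * integral\<^sup>L (samples n) L + t\<^sup>2) / t\<^sup>2"
    using int_cD2 int_L by (simp add: samples.prob_space)
  also have "\<dots> \<le> ((n * \<mu> + (n * \<mu>)\<^sup>2) - 2 * t * t + t\<^sup>2) / t\<^sup>2"
  proof -
    have "(\<integral>x. (cD x)\<^sup>2 \<partial>samples n) \<le> n * \<mu> + (n * \<mu>)\<^sup>2"
      unfolding cD_def D_def \<mu>_def by (rule integral_samples_count_square_le) simp
    moreover have "t \<le> integral\<^sup>L (samples n) L"
      using integral_samples_sum_isolation_bound_ge[of "\<epsilon> / n" n] eps n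
      by (simp add: L_def[abs_def] D_def \<mu>_def t_def)
    ultimately show ?thesis using t by (smt (verit) divide_right_mono mult_left_mono zero_le_power2)
  qed
  also have "\<dots> = (n * \<mu> + (n * \<mu>)\<^sup>2) / t\<^sup>2 - 1"
    using t by (simp add: field_simps power2_eq_square)
  finally show ?thesis by (simp add: t_def)
qed

lemma AE_W_zero_if_set_integral_le_0:
  assumes A[measurable]: "A \<in> sets (M \<Otimes>\<^sub>M M)" and le: "(\<integral>p \<in> A. W (fst p) (snd p) \<partial>(M \<Otimes>\<^sub>M M)) \<le> 0"
  shows "AE p in M \<Otimes>\<^sub>M M. p \<in> A \<longrightarrow> W (fst p) (snd p) = 0"
proof -
  define g where "g p = indicator A p * W (fst p) (snd p)" for p
  have nonneg: "0 \<le> g p" if "p \<in> space (M \<Otimes>\<^sub>M M)" for p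
    using that by (auto simp: g_def indicator_def space_pair_measure intro!: W_nonneg)
  have "g \<in> borel_measurable (M \<Otimes>\<^sub>M M)" unfolding g_def[abs_def] by measurable
  then have int: "integrable (M \<Otimes>\<^sub>M M) g"
    by (rule integrable_pair_bounded[where B=1])
      (auto simp: g_def indicator_def space_pair_measure intro!: W_abs_le_1)
  have "integral\<^sup>L (M \<Otimes>\<^sub>M M) g \<le> 0"
    using le by (simp add: set_lebesgue_integral_def g_def[abs_def])
  moreover have "0 \<le> integral\<^sup>L (M \<Otimes>\<^sub>M M) g" using nonneg by (intro integral_nonneg_AE AE_I2) auto
  ultimately have "integral\<^sup>L (M \<Otimes>\<^sub>M M) g = 0" by simp
  then have "AE p in M \<Otimes>\<^sub>M M. g p = 0"
    using integral_nonneg_eq_0_iff_AE[OF int] nonneg by (simp add: AE_I2)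
  then show ?thesis by eventually_elim (auto simp: g_def)
qed

lemma tendsto_ham_prob_0_disconnected:
  assumes "\<not> connected_graphon M W"
  shows "(\<lambda>n. ham_prob M W n) \<longlonglongrightarrow> 0"
proof -
  obtain S T where S: "S \<in> sets M" and T: "T \<in> sets M" and disj: "S \<inter> T = {}"
    and cover: "S \<union> T = space M" and pos: "0 < prob S" "0 < prob T"
    and not_pos: "\<not> 0 < (\<integral>p \<in> S \<times> T. W (fst p) (snd p) \<partial>(M \<Otimes>\<^sub>M M))"
    using assms unfolding connected_graphon_def by blast
  then have le: "(\<integral>p \<in> S \<times> T. W (fst p) (snd p) \<partial>(M \<Otimes>\<^sub>M M)) \<le> 0" by simp
  have zero: "AE p in M \<Otimes>\<^sub>M M. p \<in> S \<times> T \<longrightarrow> W (fst p) (snd p) = 0"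
    using S T le by (intro AE_W_zero_if_set_integral_le_0) auto
  have "prob S + prob T = 1"
    using finite_measure_Union[OF S T disj] cover prob_space by simp
  then have "(\<lambda>n. prob S ^ n + prob T ^ n) \<longlonglongrightarrow> 0 + 0"
    using pos by (intro tendsto_add LIMSEQ_power_zero) auto
  then have lim: "(\<lambda>n. prob S ^ n + prob T ^ n) \<longlonglongrightarrow> 0" by simp
  show ?thesis
    by (rule tendsto_sandwich[OF always_eventually always_eventually tendsto_const lim])
       (auto intro: ham_prob_nonneg ham_prob_le_disconnected[OF S T cover zero])
qed

lemma tendsto_ham_prob_0_peninsula:
  assumes "narrow_peninsula M W"
  shows "(\<lambda>n. ham_prob M W n) \<longlonglongrightarrow> 0"
proof -
  obtain a A B where a: "0 < a" and A: "A \<in> sets M" and B: "B \<in> sets M" and disj: "A \<inter> B = {}"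
    and mA: "a < prob A" and mB: "prob B = 1 - 2 * a"
    and zero: "AE p in M \<Otimes>\<^sub>M M. p \<in> A \<times> (A \<union> B) \<longrightarrow> W (fst p) (snd p) = 0"
    using assms unfolding narrow_peninsula_def by blast
  define d where "d = prob A - prob (space M - (A \<union> B))"
  have "prob (space M - (A \<union> B)) = 1 - (prob A + prob B)"
    using prob_compl[of "A \<union> B"] finite_measure_Union[OF A B disj] A B by simp
  then have d: "0 < d" using mA mB by (simp add: d_def)
  have bound: "ham_prob M W n \<le> (1 / d\<^sup>2) / n" if "0 < n" for n
    using ham_prob_le_peninsula[OF A B zero _ that] d by (simp add: d_def field_simps)
  show ?thesis
  proof (rule tendsto_sandwich[OF _ _ tendsto_const lim_const_over_n])
    show "\<forall>\<^sub>F n in sequentially. 0 \<le> ham_prob M W n"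
      by (intro always_eventually allI ham_prob_nonneg)
    show "\<forall>\<^sub>F n in sequentially. ham_prob M W n \<le> 1 / d\<^sup>2 / n"
      using eventually_gt_at_top[of 0] by eventually_elim (rule bound)
  qed
qed

lemma tendsto_ham_prob_0_bipartite:
  assumes "S \<in> sets M" "T \<in> sets M" "S \<inter> T = {}" "S \<union> T = space M" "prob S = 1/2"
    and zero: "AE p in M \<Otimes>\<^sub>M M. p \<in> S \<times> S \<union> T \<times> T \<longrightarrow> W (fst p) (snd p) = 0"
  shows "(\<lambda>n. ham_prob M W n) \<longlonglongrightarrow> 0"
proof -
  have "T = space M - S" using assms(3,4) by auto
  then have bound: "ham_prob M W n \<le> inverse (sqrt (1 + real n))" for n
    using ham_prob_le_bipartite[OF assms(1,5)] zero by (simp add: add.commute divide_inverse)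
  have lim: "(\<lambda>n. inverse (sqrt (1 + real n))) \<longlonglongrightarrow> 0"
    by (intro tendsto_inverse_0_at_top filterlim_compose[OF sqrt_at_top]
        filterlim_tendsto_add_at_top[OF tendsto_const filterlim_real_sequentially])
  show ?thesis
    by (rule tendsto_sandwich[OF always_eventually always_eventually tendsto_const lim])
       (auto intro: ham_prob_nonneg bound)
qed

lemma tendsto_ham_prob_0_low_degree:
  assumes lim: "filterlim (\<lambda>\<alpha>. prob (low_deg_set M W \<alpha>) / \<alpha>) at_top (at_right 0)"
  shows "(\<lambda>n. ham_prob M W n) \<longlonglongrightarrow> 0"
proof (rule order_tendstoI)
  fix a :: real assume "a < 0"
  then show "\<forall>\<^sub>F n in sequentially. a < ham_prob M W n"
    using ham_prob_nonneg by (intro always_eventually) (auto intro: less_le_trans)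
next
  fix \<delta> :: real assume \<delta>: "0 < \<delta>"
  define \<epsilon> where "\<epsilon> = min (1/4) (\<delta>/8)"
  have \<epsilon>: "0 < \<epsilon>" "\<epsilon> \<le> 1/4" "\<epsilon> \<le> \<delta>/8" using \<delta> by (auto simp: \<epsilon>_def)
  define K where "K = 4/\<delta> + 1"
  have K: "0 < K" using \<delta> by (simp add: K_def add_pos_nonneg)
  have "\<forall>\<^sub>F \<alpha> in at_right 0. K / \<epsilon> \<le> prob (low_deg_set M W \<alpha>) / \<alpha>"
    using lim unfolding filterlim_at_top by blast
  then obtain b where b: "0 < b"
    and large: "\<And>\<alpha>. 0 < \<alpha> \<Longrightarrow> \<alpha> < b \<Longrightarrow> K / \<epsilon> \<le> prob (low_deg_set M W \<alpha>) / \<alpha>"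
    unfolding eventually_at_right_field by blast
  obtain N :: nat where N: "\<epsilon> / b < N" using reals_Archimedean2 by blast
  show "\<forall>\<^sub>F n in sequentially. ham_prob M W n < \<delta>"
  proof (rule eventually_sequentiallyI[of "Suc N"])
    fix n assume "Suc N \<le> n"
    then have n: "0 < n" "\<epsilon> / b < n" using N by linarith+
    define \<mu> where "\<mu> = prob (low_deg_set M W (\<epsilon> / n))"
    have "\<epsilon> / n < b" using n b by (simp add: divide_less_eq mult.commute)
    moreover have "0 < \<epsilon> / n" using \<epsilon> n by simp
    ultimately have "K / \<epsilon> \<le> \<mu> / (\<epsilon> / n)" unfolding \<mu>_def by (rule large[rotated])
    then have "K \<le> n * \<mu>" using \<epsilon> n by (simp add: field_simps)
    then have "0 < \<mu>" using K n by (smt (verit) mult_nonneg_nonpos of_nat_0_le_iff)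
    then have "ham_prob M W n \<le> (n * \<mu> + (n * \<mu>)\<^sup>2) / (n * \<mu> * (1 - \<epsilon>))\<^sup>2 - 1"
      using ham_prob_le_low_degree[of \<epsilon> n] \<epsilon> n by (simp add: \<mu>_def)
    also have "\<dots> < \<delta>"
      using low_degree_bound_lt[OF \<delta> \<epsilon>] \<open>K \<le> n * \<mu>\<close> by (simp add: K_def)
    finally show "ham_prob M W n < \<delta>" .
  qed
qed

end

theorem proposition6p1:
  fixes M :: "'a measure" and W :: "'a \<Rightarrow> 'a \<Rightarrow> real"
  assumes "atomless_standard_prob_space M"
    and "graphon M W"
    and "\<not> connected_graphon M W
         \<or> filterlim (\<lambda>\<alpha>. measure M (low_deg_set M W \<alpha>) / \<alpha>) at_top (at_right 0)
         \<or> narrow_peninsula M W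
         \<or> (\<exists>S T. S \<in> sets M \<and> T \<in> sets M \<and> S \<inter> T = {} \<and> S \<union> T = space M \<and>
               measure M S = 1/2 \<and> measure M T = 1/2 \<and>
               (AE p in M \<Otimes>\<^sub>M M. p \<in> (S \<times> S) \<union> (T \<times> T) \<longrightarrow> W (fst p) (snd p) = 0))"
  shows "(\<lambda>n. ham_prob M W n) \<longlonglongrightarrow> 0"
proof -
  have "prob_space M" using assms(1) by (simp add: atomless_standard_prob_space_def)
  then interpret graphon_model M W
    using assms(2) by (intro graphon_model.intro graphon_model_axioms.intro)
  show ?thesis
    using assms(3) tendsto_ham_prob_0_disconnected tendsto_ham_prob_0_low_degree
      tendsto_ham_prob_0_peninsula tendsto_ham_prob_0_bipartite by blast
qed

end
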